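(* Let $k\ge 0$ be an integer and let $G=(V,E)$ be a finite graph which is the union of a finite nonempty family $Q$ of v-cliques (i.e. $V=\bigcup_{C\in Q}C$ and $E$ is the set of pairs of distinct nodes lying in a common member of $Q$). Suppose that for every pair of v-cliques $C,C'\in Q$ there is a sequence $C=C_0,C_1,\dots,C_t=C'$ of members of $Q$ such that $|C_{i-1}\cap C_i|\ge k+1$ for all $i=1,\dots,t$. Then $G$ is $k$-robust.
   Context: A v-clique is a set of nodes inducing a complete subgraph. A finite simple undirected graph $H$ is $k$-robust if, after removing arbitrary $k$ nodes of $H$ and the edges incident to them, the remaining graph is still connected; a clique or a single node is $k$-robust for every $k$. *)

theory Defs
  imports Main
begin

(* A finite simple graph is given by a vertex set V and a symmetric irreflexive
   adjacency predicate E; only edges between vertices of V matter. *)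

definition is_vclique :: "'a set \<Rightarrow> ('a \<Rightarrow> 'a \<Rightarrow> bool) \<Rightarrow> bool" where
  "is_vclique V E \<longleftrightarrow> (\<forall>x\<in>V. \<forall>y\<in>V. x \<noteq> y \<longrightarrow> E x y)"

(* connectivity of the subgraph induced on V (the empty graph counts as connected) *)
definition connected_graph :: "'a set \<Rightarrow> ('a \<Rightarrow> 'a \<Rightarrow> bool) \<Rightarrow> bool" where
  "connected_graph V E \<longleftrightarrow>
     (\<forall>x\<in>V. \<forall>y\<in>V. (\<lambda>a b. a \<in> V \<and> b \<in> V \<and> E a b)\<^sup>*\<^sup>* x y)"

definition k_robust :: "nat \<Rightarrow> 'a set \<Rightarrow> ('a \<Rightarrow> 'a \<Rightarrow> bool) \<Rightarrow> bool" where
  "k_robust k V E \<longleftrightarrow> is_vclique V E \<or>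
     (\<forall>S. S \<subseteq> V \<longrightarrow> card S \<le> k \<longrightarrow> connected_graph (V - S) E)"

definition union_vertices :: "'a set set \<Rightarrow> 'a set" where
  "union_vertices Q = \<Union>Q"

definition union_edges :: "'a set set \<Rightarrow> 'a \<Rightarrow> 'a \<Rightarrow> bool" where
  "union_edges Q x y \<longleftrightarrow> x \<noteq> y \<and> (\<exists>C\<in>Q. x \<in> C \<and> y \<in> C)"

end

theory Submission
  imports Defs
begin

text \<open>Removing at most \<open>k\<close> nodes leaves each clique \<open>C \<in> Q\<close> as a clique \<open>C - S\<close>
  of the remaining graph, and two consecutive cliques of a chain still meet there, since
  \<open>|C\<^sub>i\<^sub>-\<^sub>1 \<inter> C\<^sub>i| \<ge> k + 1 > |S|\<close>. Walking along the chain joining a clique of \<open>x\<close> to a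
  clique of \<open>y\<close> therefore connects \<open>x\<close> to \<open>y\<close> outside \<open>S\<close>.\<close>

lemma ex_not_in_if_card_less:
  assumes "finite S" and "card S < card A"
  shows "\<exists>z\<in>A. z \<notin> S"
  using assms card_mono leD by blast

lemma rtranclp_along_chain:
  assumes "cs \<noteq> []"
    and "\<forall>A\<in>set cs. \<forall>a\<in>A. \<forall>b\<in>A. R\<^sup>*\<^sup>* a b"
    and "\<forall>i. Suc i < length cs \<longrightarrow> cs ! i \<inter> cs ! Suc i \<noteq> {}"
    and "x \<in> hd cs" and "y \<in> last cs"
  shows "R\<^sup>*\<^sup>* x y"
  using assms
proof (induction cs arbitrary: x)
  case Nil
  then show ?case by simp
next
  case (Cons c cs)
  show ?case
  proof (cases "cs = []")
    case True
    then show ?thesis using Cons.prems by simp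
  next
    case False
    have "c \<inter> hd cs \<noteq> {}"
      using Cons.prems(3)[rule_format, of 0] False by (simp add: hd_conv_nth)
    then obtain z where z: "z \<in> c" "z \<in> hd cs" by blast
    have "R\<^sup>*\<^sup>* x z" using Cons.prems z by simp
    moreover have "R\<^sup>*\<^sup>* z y"
    proof (rule Cons.IH)
      show "\<forall>i. Suc i < length cs \<longrightarrow> cs ! i \<inter> cs ! Suc i \<noteq> {}"
        using Cons.prems(3) by (metis Suc_less_eq length_Cons nth_Cons_Suc)
    qed (use False Cons.prems z in auto)
    ultimately show ?thesis by simp
  qed
qed

lemma rtranclp_union_edges_in_clique:
  assumes "C \<in> Q" and "a \<in> C - S" and "b \<in> C - S"
  shows "(\<lambda>u v. u \<in> \<Union>Q - S \<and> v \<in> \<Union>Q - S \<and> union_edges Q u v)\<^sup>*\<^sup>* a b"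
proof (cases "a = b")
  case False
  with assms show ?thesis
    by (intro r_into_rtranclp) (auto simp: union_edges_def)
qed simp

theorem theorem2:
  fixes k :: nat and Q :: "'a set set"
  assumes fin: "finite (union_vertices Q)"
    and ne: "Q \<noteq> {}"
    and chain: "\<forall>C\<in>Q. \<forall>C'\<in>Q. \<exists>cs. cs \<noteq> [] \<and> hd cs = C \<and> last cs = C' \<and> set cs \<subseteq> Q \<and>
                   (\<forall>i. Suc i < length cs \<longrightarrow> card (cs ! i \<inter> cs ! Suc i) \<ge> k + 1)"
  shows "k_robust k (union_vertices Q) (union_edges Q)"
  unfolding k_robust_def connected_graph_def union_vertices_def
proof (intro disjI2 allI impI ballI)
  fix S x y
  assume S: "S \<subseteq> \<Union>Q" "card S \<le> k" and x: "x \<in> \<Union>Q - S" and y: "y \<in> \<Union>Q - S"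
  then obtain C C' where "C \<in> Q" "x \<in> C" "C' \<in> Q" "y \<in> C'" by blast
  then obtain cs where cs: "cs \<noteq> []" "hd cs = C" "last cs = C'" "set cs \<subseteq> Q"
    "\<forall>i. Suc i < length cs \<longrightarrow> card (cs ! i \<inter> cs ! Suc i) \<ge> k + 1"
    using chain by meson
  have "finite S" using S fin finite_subset unfolding union_vertices_def by blast
  have "(cs ! i - S) \<inter> (cs ! Suc i - S) \<noteq> {}" if "Suc i < length cs" for i
  proof -
    have "card S < card (cs ! i \<inter> cs ! Suc i)" using cs(5) that S(2) by fastforce
    then show ?thesis using ex_not_in_if_card_less[OF \<open>finite S\<close>] by blast
  qed
  then show "(\<lambda>u v. u \<in> \<Union>Q - S \<and> v \<in> \<Union>Q - S \<and> union_edges Q u v)\<^sup>*\<^sup>* x y"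
    using cs x y \<open>x \<in> C\<close> \<open>y \<in> C'\<close> rtranclp_union_edges_in_clique[of _ Q _ S]
    by (intro rtranclp_along_chain[of "map (\<lambda>A. A - S) cs"])
      (auto simp: hd_map last_map subset_iff)
qed

end
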